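(* Let $d,n\ge 1$, let $\mathbf{x}_1,\ldots,\mathbf{x}_n\in\mathbb{R}^d$ (column vectors), $y_1,\ldots,y_n\in\mathbb{R}$, and $\eta>0$. Consider the causal (auto-regressive) linear self-attention layer acting on a sequence $(\mathbf{z}_1,\ldots,\mathbf{z}_n)$ of vectors in $\mathbb{R}^{d+1}$ by $$\mathbf{z}_j\leftarrow \mathbf{z}_j+\mathbf{P}\mathbf{V}\sum_{i=1}^j \mathbf{z}_i\left(\mathbf{z}_i^\top\mathbf{K}^\top\mathbf{Q}\mathbf{z}_j\right),\qquad j=1,\ldots,n,$$ with parameters $$\mathbf{K}=\mathbf{Q}=\begin{pmatrix}\mathbf{I}_{d\times d}&\mathbf{0}\\ 0&0\end{pmatrix},\quad \mathbf{V}=\begin{pmatrix}\mathbf{0}_{d\times d}&\mathbf{0}\\ \mathbf{0}&-1\end{pmatrix},\quad \mathbf{P}=\frac{\eta}{n}\mathbf{I}.$$ Apply $l$ such layers in succession (all with these same parameters) to the input $\mathbf{z}_j^{(0)}=(\mathbf{x}_j^\top,y_j)^\top$, $j=1,\ldots,n$, and denote by $\mathbf{z}_j^{(l)}$ the output of the $l$-th layer. For each position $j$ define row vectors $\mathbf{w}_j^{(l)}\in\mathbb{R}^{1\times d}$ by $\mathbf{w}_j^{(0)}=0$ and $$\mathbf{w}_j^{(l)}=\mathbf{w}_j^{(l-1)}+\frac{\eta}{n}\sum_{i=1}^j\left(y_i-\mathbf{w}_i^{(l-1)}\mathbf{x}_i\right)\mathbf{x}_i^\top,\qquad l\ge 1.$$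 Then for every $l\ge 0$ and every $j$, $\mathbf{z}_j^{(l)}=(\mathbf{x}_j^\top,\delta_j^{(l)})^\top$ where $\delta_j^{(l)}=y_j-\mathbf{w}_j^{(l)}\mathbf{x}_j$.
   Context: Weight vectors are $1\times d$ row vectors and inputs $\mathbf{x}_i$ are $d\times 1$ column vectors, so $\mathbf{w}\mathbf{x}_i$ is a scalar. *)

theory Defs
  imports Complex_Main
begin

text \<open>Vectors of R^m are represented as functions nat => real, only the components
0..m-1 being relevant; m x m matrices as functions nat => nat => real with
indices 0..m-1. A token z_j in R^(d+1) has components 0..d-1 (the x-part) and
component d (the y-part). Sequences are indexed by positions 1..n.\<close>

definition mat_vec :: "nat \<Rightarrow> (nat \<Rightarrow> nat \<Rightarrow> real) \<Rightarrow> (nat \<Rightarrow> real) \<Rightarrow> (nat \<Rightarrow> real)" where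
  "mat_vec m A v = (\<lambda>a. \<Sum>b<m. A a b * v b)"

definition vdot :: "nat \<Rightarrow> (nat \<Rightarrow> real) \<Rightarrow> (nat \<Rightarrow> real) \<Rightarrow> real" where
  "vdot m u v = (\<Sum>a<m. u a * v a)"

text \<open>One causal linear self-attention layer on tokens of dimension m:
  z_j <- z_j + P V sum_{i=1..j} z_i (z_i^T K^T Q z_j),
using z_i^T K^T Q z_j = (K z_i) . (Q z_j).\<close>
definition causal_lsa_layer ::
  "nat \<Rightarrow> (nat \<Rightarrow> nat \<Rightarrow> real) \<Rightarrow> (nat \<Rightarrow> nat \<Rightarrow> real) \<Rightarrow> (nat \<Rightarrow> nat \<Rightarrow> real)
   \<Rightarrow> (nat \<Rightarrow> nat \<Rightarrow> real) \<Rightarrow> (nat \<Rightarrow> nat \<Rightarrow> real) \<Rightarrow> (nat \<Rightarrow> nat \<Rightarrow> real)" where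
  "causal_lsa_layer m K Q V P z =
     (\<lambda>j. \<lambda>a. z j a +
        mat_vec m P (mat_vec m V
          (\<lambda>b. \<Sum>i=1..j. z i b * vdot m (mat_vec m K (z i)) (mat_vec m Q (z j)))) a)"

definition KQ_mat :: "nat \<Rightarrow> nat \<Rightarrow> nat \<Rightarrow> real" where
  "KQ_mat d = (\<lambda>a b. if a = b \<and> a < d then 1 else 0)"

definition V_mat :: "nat \<Rightarrow> nat \<Rightarrow> nat \<Rightarrow> real" where
  "V_mat d = (\<lambda>a b. if a = d \<and> b = d then -1 else 0)"

definition P_mat :: "real \<Rightarrow> nat \<Rightarrow> nat \<Rightarrow> nat \<Rightarrow> real" where
  "P_mat \<eta> n = (\<lambda>a b. if a = b then \<eta> / real n else 0)"

definition input_tokens :: "nat \<Rightarrow> (nat \<Rightarrow> nat \<Rightarrow> real) \<Rightarrow> (nat \<Rightarrow> real) \<Rightarrow> nat \<Rightarrow> nat \<Rightarrow> real" where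
  "input_tokens d x y = (\<lambda>j a. if a < d then x j a else if a = d then y j else 0)"

definition tokens_after :: "nat \<Rightarrow> nat \<Rightarrow> real \<Rightarrow> (nat \<Rightarrow> nat \<Rightarrow> real) \<Rightarrow> (nat \<Rightarrow> real)
    \<Rightarrow> nat \<Rightarrow> nat \<Rightarrow> nat \<Rightarrow> real" where
  "tokens_after d n \<eta> x y l =
     ((causal_lsa_layer (d + 1) (KQ_mat d) (KQ_mat d) (V_mat d) (P_mat \<eta> n)) ^^ l)
       (input_tokens d x y)"

fun wvec :: "nat \<Rightarrow> nat \<Rightarrow> real \<Rightarrow> (nat \<Rightarrow> nat \<Rightarrow> real) \<Rightarrow> (nat \<Rightarrow> real)
    \<Rightarrow> nat \<Rightarrow> nat \<Rightarrow> nat \<Rightarrow> real" where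
  "wvec d n \<eta> x y 0 j = (\<lambda>k. 0)"
| "wvec d n \<eta> x y (Suc l) j =
     (\<lambda>k. wvec d n \<eta> x y l j k + \<eta> / real n *
        (\<Sum>i=1..j. (y i - (\<Sum>k'<d. wvec d n \<eta> x y l i k' * x i k')) * x i k))"

end

theory Submission
  imports Defs
begin

text \<open>With these parameters the attention score of tokens i and j is the inner product of
their x-parts, and V reads and writes only the label coordinate d. Hence a layer never
changes the x-parts and updates the label coordinates by
  delta_j <- delta_j - eta/n * sum_{i=1..j} delta_i (x_i . x_j).
Exchanging the two sums shows that the residuals y_j - w_j x_j of the iterates w_j obey the
same recursion, and induction on the number of layers concludes.\<close>

lemma mat_vec_KQ_mat: "mat_vec (d + 1) (KQ_mat d) v = (\<lambda>a. if a < d then v a else 0)"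
  by (auto simp: mat_vec_def KQ_mat_def if_distrib if_distribR cong: if_cong)

lemma mat_vec_V_mat: "mat_vec (d + 1) (V_mat d) v = (\<lambda>a. if a = d then - v d else 0)"
  by (auto simp: mat_vec_def V_mat_def if_distrib if_distribR cong: if_cong)

lemma mat_vec_P_mat: "mat_vec m (P_mat \<eta> n) v = (\<lambda>a. if a < m then \<eta> / real n * v a else 0)"
  by (auto simp: mat_vec_def P_mat_def if_distrib if_distribR cong: if_cong)

lemma vdot_truncated:
  assumes "d \<le> m"
  shows "vdot m (\<lambda>a. if a < d then u a else 0) (\<lambda>a. if a < d then v a else 0) = (\<Sum>k<d. u k * v k)"
proof -
  have "vdot m (\<lambda>a. if a < d then u a else 0) (\<lambda>a. if a < d then v a else 0)
      = (\<Sum>a\<in>{..<m} \<inter> {..<d}. u a * v a)"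
    by (simp add: vdot_def sum.inter_restrict if_distrib cong: if_cong)
  also have "{..<m} \<inter> {..<d} = {..<d}"
    using assms by auto
  finally show ?thesis .
qed

lemma causal_lsa_layer_regression_params:
  "causal_lsa_layer (d + 1) (KQ_mat d) (KQ_mat d) (V_mat d) (P_mat \<eta> n) z j a =
     (if a = d then z j d - \<eta> / real n * (\<Sum>i=1..j. z i d * (\<Sum>k<d. z i k * z j k))
      else z j a)"
  unfolding causal_lsa_layer_def mat_vec_KQ_mat mat_vec_V_mat mat_vec_P_mat
  by (simp add: vdot_truncated)

lemma tokens_after_Suc:
  "tokens_after d n \<eta> x y (Suc l) =
     causal_lsa_layer (d + 1) (KQ_mat d) (KQ_mat d) (V_mat d) (P_mat \<eta> n) (tokens_after d n \<eta> x y l)"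
  by (simp add: tokens_after_def)

lemma wvec_Suc_residual:
  fixes d n \<eta> x y l
  defines "r \<equiv> \<lambda>l i. y i - (\<Sum>k<d. wvec d n \<eta> x y l i k * x i k)"
  shows "r (Suc l) j = r l j - \<eta> / real n * (\<Sum>i=1..j. r l i * (\<Sum>k<d. x i k * x j k))"
proof -
  have "(\<Sum>i=1..j. r l i * (\<Sum>k<d. x i k * x j k)) = (\<Sum>k<d. (\<Sum>i=1..j. r l i * x i k) * x j k)"
    by (simp add: sum_distrib_left sum_distrib_right mult_ac) (rule sum.swap)
  then show ?thesis
    by (simp add: r_def algebra_simps sum.distrib sum_distrib_left)
qed

lemma tokens_after_eq_residual:
  "(\<forall>a<d. tokens_after d n \<eta> x y l j a = x j a) \<and>
   tokens_after d n \<eta> x y l j d = y j - (\<Sum>k<d. wvec d n \<eta> x y l j k * x j k)"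
proof (induction l arbitrary: j)
  case 0
  then show ?case
    by (simp add: tokens_after_def input_tokens_def)
next
  case (Suc l)
  then show ?case
    unfolding tokens_after_Suc causal_lsa_layer_regression_params
    by (simp add: wvec_Suc_residual del: wvec.simps)
qed

theorem proposition2:
  fixes d n :: nat and x :: "nat \<Rightarrow> nat \<Rightarrow> real" and y :: "nat \<Rightarrow> real" and \<eta> :: real
  assumes "d \<ge> 1" and "n \<ge> 1" and "\<eta> > 0"
  shows "\<forall>l j. j \<in> {1..n} \<longrightarrow>
           (\<forall>a<d. tokens_after d n \<eta> x y l j a = x j a) \<and>
           tokens_after d n \<eta> x y l j d = y j - (\<Sum>k<d. wvec d n \<eta> x y l j k * x j k)"
  using tokens_after_eq_residual by blast

end
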